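(* Let $0<\mu\le L$, $G>0$, $\rho>0$, $n\ge1$, $T\ge1$, and let $\eta>0$ satisfy $\eta\le\frac{2}{\mu+L}-\frac{\mu+L}{2\mu L(\mu/(\rho L^2)+1)}$. Then $$\frac{2G^2(\mu+L)}{n\mu L(1+\mu\rho)}\left\{1-\left[1-(1+\mu\rho)\frac{\eta\mu L}{\mu+L}\right]^T\right\}\le\frac{2G^2(\mu+L)}{n\mu L}\left\{1-\left[1-\frac{\eta\mu L}{\mu+L}\right]^T\right\};$$ that is, for per-example losses that are $\mu$-strongly convex, $L$-smooth and $G$-Lipschitz, run with such a constant learning rate for $T$ steps, the uniform-stability generalization bound of SAM (left) is at most that of SGD (right).
   Context: The left side is the generalization-error bound for SAM (update $\boldsymbol{w}_{t+1}=\boldsymbol{w}_t-\eta\nabla f(\boldsymbol{w}_t+\rho\nabla f(\boldsymbol{w}_t,z),z)$ with a uniformly sampled example $z$ from an $n$-example training set), and the right side is the corresponding bound for SGD with the same learning rate. *)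

theory Defs
  imports Complex_Main
begin

end

theory Submission
  imports Defs
begin

text \<open>With \<open>a = \<eta>\<mu>L/(\<mu>+L)\<close> and \<open>c = 1 + \<mu>\<rho>\<close>, SAM contracts by the factor \<open>1 - c a\<close>
  and SGD by \<open>1 - a\<close>. Since \<open>1 - x\<^sup>T = (1 - x) (1 + x + \<dots> + x\<^sup>T\<^sup>-\<^sup>1)\<close>, the comparison reduces
  to termwise monotonicity of the geometric sums, which needs \<open>0 \<le> 1 - c a\<close>; the step-size
  hypothesis yields this via \<open>4\<mu>L \<le> (\<mu>+L)\<^sup>2\<close> and \<open>\<mu> \<le> L\<close>.\<close>

lemma one_minus_power_scaled_le:
  fixes a c :: "'a :: linordered_idom" and T :: nat
  assumes "0 \<le> a" and "1 \<le> c" and "c * a \<le> 1"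
  shows "1 - (1 - c * a) ^ T \<le> c * (1 - (1 - a) ^ T)"
proof -
  have "a \<le> c * a"
    using assms(1,2) mult_right_mono[of 1 c a] by simp
  then have "(\<Sum>i<T. (1 - c * a) ^ i) \<le> (\<Sum>i<T. (1 - a) ^ i)"
    using assms(3) by (intro sum_mono power_mono) auto
  then have "c * a * (\<Sum>i<T. (1 - c * a) ^ i) \<le> c * a * (\<Sum>i<T. (1 - a) ^ i)"
    using assms by (intro mult_left_mono) auto
  then show ?thesis
    by (simp add: one_diff_power_eq mult.assoc)
qed

lemma sam_step_size_le:
  fixes \<mu> L \<rho> \<eta> :: real
  assumes "0 < \<mu>" and "0 < L" and "0 < \<rho>"
    and "\<eta> \<le> 2 / (\<mu> + L) - (\<mu> + L) / (2 * \<mu> * L * (\<mu> / (\<rho> * L^2) + 1))"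
  shows "\<eta> * \<mu> * L / (\<mu> + L) \<le> \<mu> / (2 * (\<mu> + \<rho> * L^2))"
proof -
  have "0 < \<mu> + L" and "0 < \<mu> * L" and "0 < \<rho> * L^2"
    using assms by auto
  have "4 * (\<mu> * L) \<le> (\<mu> + L)^2"
    using zero_le_power2[of "\<mu> - L"] by (simp add: power2_eq_square algebra_simps)
  then have amgm: "2 / (\<mu> + L) * (\<mu> * L / (\<mu> + L)) \<le> 1/2"
    using \<open>0 < \<mu> + L\<close> by (simp add: power2_eq_square pos_divide_le_eq)
  have "\<mu> / (\<rho> * L^2) + 1 = (\<mu> + \<rho> * L^2) / (\<rho> * L^2)"
    using \<open>0 < \<rho>\<close> \<open>0 < L\<close> by (simp add: add_divide_distrib)
  then have penalty: "(\<mu> + L) / (2 * \<mu> * L * (\<mu> / (\<rho> * L^2) + 1)) * (\<mu> * L / (\<mu> + L))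
      = \<rho> * L^2 / (2 * (\<mu> + \<rho> * L^2))"
    using \<open>0 < \<mu> + L\<close> \<open>0 < \<mu> * L\<close> \<open>0 < \<rho> * L^2\<close> assms(1) by simp
  have "\<eta> * \<mu> * L / (\<mu> + L) = \<eta> * (\<mu> * L / (\<mu> + L))"
    by simp
  also have "\<dots> \<le> (2 / (\<mu> + L) - (\<mu> + L) / (2 * \<mu> * L * (\<mu> / (\<rho> * L^2) + 1))) * (\<mu> * L / (\<mu> + L))"
    using assms(4) \<open>0 < \<mu> + L\<close> \<open>0 < \<mu> * L\<close> by (intro mult_right_mono) auto
  also have "\<dots> \<le> 1/2 - \<rho> * L^2 / (2 * (\<mu> + \<rho> * L^2))"
    unfolding left_diff_distrib using amgm penalty by linarith
  also have "\<dots> = \<mu> / (2 * (\<mu> + \<rho> * L^2))"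
    using \<open>0 < \<mu>\<close> \<open>0 < \<rho> * L^2\<close> by (simp add: field_simps)
  finally show ?thesis .
qed

lemma sam_contraction_le_one:
  fixes \<mu> L \<rho> a :: real
  assumes "0 < \<mu>" and "\<mu> \<le> L" and "0 < \<rho>" and "a \<le> \<mu> / (2 * (\<mu> + \<rho> * L^2))"
  shows "(1 + \<mu> * \<rho>) * a \<le> 1"
proof -
  have "0 \<le> \<rho> * L^2" and denom_pos: "0 < \<mu> + \<rho> * L^2"
    using assms by (auto intro: add_pos_nonneg)
  have "(1 + \<mu> * \<rho>) * \<mu> = \<mu> + \<rho> * \<mu>^2"
    by (simp add: algebra_simps power2_eq_square)
  also have "\<dots> \<le> \<mu> + \<rho> * L^2"
    using assms by (simp add: power_mono)
  also have "\<dots> \<le> 2 * (\<mu> + \<rho> * L^2)"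
    using assms(1) \<open>0 \<le> \<rho> * L^2\<close> by simp
  finally have "(1 + \<mu> * \<rho>) * (\<mu> / (2 * (\<mu> + \<rho> * L^2))) \<le> 1"
    using denom_pos by (simp add: pos_divide_le_eq)
  moreover have "(1 + \<mu> * \<rho>) * a \<le> (1 + \<mu> * \<rho>) * (\<mu> / (2 * (\<mu> + \<rho> * L^2)))"
    using assms by (intro mult_left_mono) auto
  ultimately show ?thesis
    by linarith
qed

theorem corollary6:
  fixes \<mu> L G \<rho> \<eta> :: real and n T :: nat
  assumes "0 < \<mu>" and "\<mu> \<le> L" and "G > 0" and "\<rho> > 0"
    and "n \<ge> 1" and "T \<ge> 1" and "\<eta> > 0"
    and "\<eta> \<le> 2 / (\<mu> + L) - (\<mu> + L) / (2 * \<mu> * L * (\<mu> / (\<rho> * L^2) + 1))"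
  shows "2 * G^2 * (\<mu> + L) / (real n * \<mu> * L * (1 + \<mu> * \<rho>))
           * (1 - (1 - (1 + \<mu> * \<rho>) * (\<eta> * \<mu> * L / (\<mu> + L))) ^ T)
         \<le> 2 * G^2 * (\<mu> + L) / (real n * \<mu> * L)
           * (1 - (1 - \<eta> * \<mu> * L / (\<mu> + L)) ^ T)"
proof -
  define a where "a = \<eta> * \<mu> * L / (\<mu> + L)"
  define c where "c = 1 + \<mu> * \<rho>"
  define C where "C = 2 * G^2 * (\<mu> + L) / (real n * \<mu> * L)"
  have "0 \<le> a" and "1 \<le> c" and "0 \<le> C"
    using assms by (auto simp: a_def c_def C_def)
  moreover have "c * a \<le> 1"
  proof -
    have "a \<le> \<mu> / (2 * (\<mu> + \<rho> * L^2))"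
      unfolding a_def using assms by (intro sam_step_size_le) auto
    then show ?thesis
      unfolding c_def using assms by (intro sam_contraction_le_one)
  qed
  ultimately have "C / c * (1 - (1 - c * a) ^ T) \<le> C / c * (c * (1 - (1 - a) ^ T))"
    by (intro mult_left_mono one_minus_power_scaled_le) auto
  also have "\<dots> = C * (1 - (1 - a) ^ T)"
    using \<open>1 \<le> c\<close> by simp
  finally show ?thesis
    by (simp add: a_def c_def C_def)
qed

end
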